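(* Consider a finite discounted stochastic game that is weakly acyclic (under multi-DM strict best replies). For each $i$ let $\lambda^i\in(0,1)$, $\gamma^i,\kappa^i\in(0,1)$, and let the DMs update policies by the Idealized Update Procedure with $h^i=R^{i,\lambda^i}$ for every $i$; let $A_{\bm{\gamma},\bm{\kappa}}$ be the transition matrix of the induced time-homogeneous Markov chain on $\bm{\Pi}$ and $\mu^*_{\bm{\gamma},\bm{\kappa}}$ its unique stationary distribution. Then for every $\epsilon>0$ there exists $\bar\kappa_\epsilon\in(0,1)$ such that whenever $\max\{\gamma^i,\kappa^i\}\in(0,\bar\kappa_\epsilon)$ for all $i$, \[ \mu^*_{\bm{\gamma},\bm{\kappa}}(\bm{\Pi}_{\rm eq})\ge 1-\epsilon/4 . \] Moreover, there exists $\bar m\in\mathbb{N}$, which can be chosen uniformly over all such $\bm{\gamma},\bm{\kappa}$, such that \[ \inf_{m\ge\bar m,\ \mu_0\in\mathcal{P}(\bm{\Pi})}\big(\mu_0A^m_{\bm{\gamma},\bm{\kappa}}\big)(\bm{\Pi}_{\rm eq})\ge 1-\epsilon/2 . \]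
   Context: Game setup: a finite discounted stochastic game with $N$ decision makers, finite state set $\mathbb{X}$, finite action sets $\mathbb{U}^i$, discount factors $\beta^i\in(0,1)$, costs $c^i:\mathbb{X}\times\mathbb{U}\to\mathbb{R}$, transition kernel $P(\cdot\mid x,\mathbf{u})$. $\Pi^i$ = set of maps $\mathbb{X}\to\mathbb{U}^i$, $\bm{\Pi}=\times_i\Pi^i$, $\bm{\pi}=(\pi^i,\bm{\pi}^{-i})$. $J^i_x(\bm{\pi})=E[\sum_{t\ge0}(\beta^i)^tc^i(x_t,\bm{\pi}(x_t))\mid x_0=x]$, $x_{t+1}\sim P(\cdot\mid x_t,\bm{\pi}(x_t))$. $\pi^i$ is a best reply to $\bm{\pi}^{-i}$ if $J^i_x(\pi^i,\bm{\pi}^{-i})=\min_{\sigma^i\in\Pi^i}J^i_x(\sigma^i,\bm{\pi}^{-i})$ for all $x$; $\mathrm{BR}^i(\bm{\pi}^{-i})$ is the set of such $\pi^i$. A best reply $\tilde\pi^i$ to $\bm{\pi}^{-i}$ is a strict best reply with respect to $\bm{\pi}=(\pi^i,\bm{\pi}^{-i})$ if $J^i_x(\tilde\pi^i,\bm{\pi}^{-i})<J^i_x(\pi^i,\bm{\pi}^{-i})$ for some $x$. $\bm{\Pi}_{\rm eq}=\{\bm{\pi}\in\bm{\Pi}:\pi^i\in\mathrm{BR}^i(\bm{\pi}^{-i})\ \forall i\}$. $\bm{\Pi}_{\rm opt}=\{\bm{\pi}^*:J^i_x(\bm{\pi}^* )=\inf_{\bm{\pi}}J^i_x(\bm{\pi})\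 \forall i,x\}$ (possibly empty). A sequence $\bm{\pi}_0,\bm{\pi}_1,\dots$ in $\bm{\Pi}$ is a multi-DM strict best reply path if for each $k$, $\bm{\pi}_k\ne\bm{\pi}_{k+1}$ and for every $i$ with $\pi^i_{k+1}\neq\pi^i_k$, $\pi^i_{k+1}$ is a strict best reply with respect to $\bm{\pi}_k$. The game is weakly acyclic if from every $\bm{\pi}\in\bm{\Pi}$ there is a (finite) multi-DM strict best reply path starting at $\bm{\pi}$ and ending in $\bm{\Pi}_{\rm eq}$. Inertial kernel $R^{i,\lambda}(\tilde\pi^i\mid\pi^i,B^i)$: $1$ if $\pi^i\in B^i,\tilde\pi^i=\pi^i$; $\lambda$ if $\pi^i\notin B^i,\tilde\pi^i=\pi^i$; $(1-\lambda)/|B^i|$ if $\pi^i\notin B^i,\tilde\pi^i\in B^i$; $0$ otherwise. Idealized Update Procedure: given $\bm{\pi}_k$, DMs choose independently: if $\bm{\pi}_k\in\bm{\Pi}_{\rm opt}$, $\pi^i_{k+1}\sim(1-\gamma^i)R^{i,\lambda^i}(\cdot\mid\pi^i_k,\mathrm{BR}^i(\bm{\pi}^{-i}_k))+\gamma^i\mathrm{Unif}(\Pi^i)$; otherwise $\pi^i_{k+1}\sim(1-\kappa^i)h^i(\cdot\mid\pi^i_k,\mathrm{BR}^i(\bm{\pi}^{-i}_k))+\kappa^i\mathrm{Unif}(\Pi^i)$. *)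

theory Defs
  imports Complex_Main
begin

text \<open>DMs are indexed by a finite type 'i, states by a
finite type 'x. All actions live in a common type 'u; the action set of DM i is U i
(finite, nonempty). A joint action is a map 'i => 'u, a joint (stationary deterministic)
policy is a map 'i => 'x => 'u. Costs c i x u, discount factors beta i, and transition
kernel P x u y = P(y | x, u).\<close>

definition Pol :: "('i \<Rightarrow> 'u set) \<Rightarrow> 'i \<Rightarrow> ('x \<Rightarrow> 'u) set" where
  "Pol U i = {f. \<forall>x. f x \<in> U i}"

definition JPol :: "('i \<Rightarrow> 'u set) \<Rightarrow> ('i \<Rightarrow> 'x \<Rightarrow> 'u) set" where
  "JPol U = {p. \<forall>i. p i \<in> Pol U i}"

fun nstep :: "('x::finite \<Rightarrow> ('i \<Rightarrow> 'u) \<Rightarrow> 'x \<Rightarrow> real) \<Rightarrow> ('i \<Rightarrow> 'x \<Rightarrow> 'u) \<Rightarrow> nat \<Rightarrow> 'x \<Rightarrow> 'x \<Rightarrow> real" where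
  "nstep P p 0 x y = (if x = y then 1 else 0)"
| "nstep P p (Suc n) x y = (\<Sum>z\<in>UNIV. nstep P p n x z * P z (\<lambda>j. p j z) y)"

definition J :: "('i \<Rightarrow> real) \<Rightarrow> ('i \<Rightarrow> 'x::finite \<Rightarrow> ('i \<Rightarrow> 'u) \<Rightarrow> real)
    \<Rightarrow> ('x \<Rightarrow> ('i \<Rightarrow> 'u) \<Rightarrow> 'x \<Rightarrow> real) \<Rightarrow> 'i \<Rightarrow> ('i \<Rightarrow> 'x \<Rightarrow> 'u) \<Rightarrow> 'x \<Rightarrow> real" where
  "J \<beta> c P i p x = (\<Sum>t. \<beta> i ^ t * (\<Sum>y\<in>UNIV. nstep P p t x y * c i y (\<lambda>j. p j y)))"

definition BR :: "('i \<Rightarrow> 'u set) \<Rightarrow> ('i \<Rightarrow> real) \<Rightarrow> ('i \<Rightarrow> 'x::finite \<Rightarrow> ('i \<Rightarrow> 'u) \<Rightarrow> real)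
    \<Rightarrow> ('x \<Rightarrow> ('i \<Rightarrow> 'u) \<Rightarrow> 'x \<Rightarrow> real) \<Rightarrow> 'i \<Rightarrow> ('i \<Rightarrow> 'x \<Rightarrow> 'u) \<Rightarrow> ('x \<Rightarrow> 'u) set" where
  "BR U \<beta> c P i p = {\<sigma> \<in> Pol U i. \<forall>x.
      J \<beta> c P i (p(i := \<sigma>)) x = Min ((\<lambda>\<sigma>'. J \<beta> c P i (p(i := \<sigma>')) x) ` Pol U i)}"

definition strict_BR where
  "strict_BR U \<beta> c P i p \<sigma> \<longleftrightarrow>
     \<sigma> \<in> BR U \<beta> c P i p \<and> (\<exists>x. J \<beta> c P i (p(i := \<sigma>)) x < J \<beta> c P i p x)"

definition Eq_set where
  "Eq_set U \<beta> c P = {p \<in> JPol U. \<forall>i. p i \<in> BR U \<beta> c P i p}"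

definition Opt_set where
  "Opt_set U \<beta> c P = {p \<in> JPol U. \<forall>i x. J \<beta> c P i p x = (INF q\<in>JPol U. J \<beta> c P i q x)}"

definition sbr_path where
  "sbr_path U \<beta> c P ps \<longleftrightarrow> set ps \<subseteq> JPol U \<and>
     (\<forall>k. Suc k < length ps \<longrightarrow> ps ! k \<noteq> ps ! Suc k \<and>
        (\<forall>i. (ps ! Suc k) i \<noteq> (ps ! k) i \<longrightarrow> strict_BR U \<beta> c P i (ps ! k) ((ps ! Suc k) i)))"

definition weakly_acyclic where
  "weakly_acyclic U \<beta> c P \<longleftrightarrow> (\<forall>p\<in>JPol U. \<exists>ps. ps \<noteq> [] \<and> hd ps = p \<and>
      sbr_path U \<beta> c P ps \<and> last ps \<in> Eq_set U \<beta> c P)"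

definition Rker :: "real \<Rightarrow> 'a \<Rightarrow> 'a \<Rightarrow> 'a set \<Rightarrow> real" where
  "Rker lam \<sigma>' \<sigma> B =
     (if \<sigma> \<in> B then (if \<sigma>' = \<sigma> then 1 else 0)
      else if \<sigma>' = \<sigma> then lam
      else if \<sigma>' \<in> B then (1 - lam) / real (card B) else 0)"

definition unif_pol :: "('i \<Rightarrow> 'u set) \<Rightarrow> 'i \<Rightarrow> ('x \<Rightarrow> 'u) \<Rightarrow> real" where
  "unif_pol U i \<sigma>' = (if \<sigma>' \<in> Pol U i then 1 / real (card (Pol U i :: ('x \<Rightarrow> 'u) set)) else 0)"

definition Amat where
  "Amat U \<beta> c P lam \<gamma> \<kappa> p q =
     (\<Prod>i\<in>UNIV.
        if p \<in> Opt_set U \<beta> c P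
        then (1 - \<gamma> i) * Rker (lam i) (q i) (p i) (BR U \<beta> c P i p) + \<gamma> i * unif_pol U i (q i)
        else (1 - \<kappa> i) * Rker (lam i) (q i) (p i) (BR U \<beta> c P i p) + \<kappa> i * unif_pol U i (q i))"

definition is_dist where
  "is_dist U \<mu> \<longleftrightarrow> (\<forall>p. 0 \<le> \<mu> p) \<and> (\<forall>p. p \<notin> JPol U \<longrightarrow> \<mu> p = 0) \<and> sum \<mu> (JPol U) = 1"

definition mulA where
  "mulA U A \<mu> q = (\<Sum>p\<in>JPol U. \<mu> p * A p q)"

definition stationary where
  "stationary U A \<mu> \<longleftrightarrow> is_dist U \<mu> \<and> (\<forall>q\<in>JPol U. mulA U A \<mu> q = \<mu> q)"

end

theory Submission
  imports Defs "HOL-Library.FuncSet"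
begin

text \<open>
While every decision maker experiments with probability at most \<open>kb\<close>, a joint equilibrium
policy stays put with probability at least \<open>(1 - kb)^N\<close> per step, so it is left within a block
of \<open>L\<close> steps with probability at most \<open>1 - (1 - kb)^(N L) \<le> N L kb\<close>. Weak acyclicity gives
from every joint policy a strict best reply path of length at most \<open>L\<close> into the equilibria,
and by inertia each of its steps has probability at least a constant \<open>a > 0\<close> independent of
\<open>kb\<close>: a decision maker that does not move keeps its policy with probability \<open>\<ge> \<lambda>\<close>, one that
moves picks its best reply with probability \<open>\<ge> (1 - \<lambda>)/|\<Pi>\<^sup>i|\<close>. Hence each block multiplies
the mass outside the equilibria by at most \<open>1 - a^L\<close>, up to an additive leakage \<open>N L kb\<close>, and
after \<open>r\<close> blocks that mass is at most \<open>(1 - a^L)^r + N L kb / a^L\<close>, which is small once \<open>r\<close> is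
large and \<open>kb\<close> small. A stationary distribution equals its own image after any number of
steps.

The update kernel is stochastic only because best replies exist: in a finite discounted MDP a
stationary policy minimising the total cost summed over the initial states is optimal from
every state, since otherwise policy improvement would lower that total.
\<close>

lemma Pol_eq_PiE: "Pol U i = PiE UNIV (\<lambda>_. U i)"
  by (auto simp: Pol_def PiE_UNIV_domain)

lemma JPol_eq_PiE: "JPol U = PiE UNIV (Pol U)"
  by (auto simp: JPol_def PiE_UNIV_domain)

lemma finite_Pol: "finite (U i) \<Longrightarrow> finite (Pol U i :: ('x::finite \<Rightarrow> 'u) set)"
  unfolding Pol_eq_PiE by (rule finite_PiE) auto

lemma Pol_nonempty: "U i \<noteq> {} \<Longrightarrow> Pol U i \<noteq> {}"
  unfolding Pol_eq_PiE by (simp add: PiE_eq_empty_iff)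

lemma finite_JPol:
  "(\<And>i. finite (U i)) \<Longrightarrow> finite (JPol U :: ('i::finite \<Rightarrow> 'x::finite \<Rightarrow> 'u) set)"
  unfolding JPol_eq_PiE by (rule finite_PiE) (auto intro: finite_Pol)

lemma JPol_action: "q \<in> JPol U \<Longrightarrow> q j x \<in> U j"
  by (simp add: JPol_def Pol_def)

lemma JPol_update: "q \<in> JPol U \<Longrightarrow> \<sigma> \<in> Pol U i \<Longrightarrow> q(i := \<sigma>) \<in> JPol U"
  by (simp add: JPol_def)

section \<open>Discounted costs and the existence of best replies\<close>

lemma nstep_Suc_left:
  "nstep P q (Suc n) x y = (\<Sum>z\<in>UNIV. P x (\<lambda>j. q j x) z * nstep P q n z y)"
proof (induction n arbitrary: y)
  case 0
  show ?case by (simp add: of_bool_def[symmetric])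
next
  case (Suc n)
  have "nstep P q (Suc (Suc n)) x y
      = (\<Sum>w\<in>UNIV. \<Sum>z\<in>UNIV. P x (\<lambda>j. q j x) z * nstep P q n z w * P w (\<lambda>j. q j w) y)"
    by (simp only: nstep.simps(2)[of P q "Suc n"] Suc.IH sum_distrib_right)
  also have "\<dots> = (\<Sum>z\<in>UNIV. P x (\<lambda>j. q j x) z * nstep P q (Suc n) z y)"
    by (subst sum.swap) (simp add: sum_distrib_left mult.assoc)
  finally show ?case .
qed

locale finite_discounted_game =
  fixes U :: "'i::finite \<Rightarrow> 'u set"
    and \<beta> :: "'i \<Rightarrow> real"
    and c :: "'i \<Rightarrow> 'x::finite \<Rightarrow> ('i \<Rightarrow> 'u) \<Rightarrow> real"
    and P :: "'x \<Rightarrow> ('i \<Rightarrow> 'u) \<Rightarrow> 'x \<Rightarrow> real"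
  assumes U_fin: "\<And>i. finite (U i)" and U_ne: "\<And>i. U i \<noteq> {}"
    and beta: "\<And>i. 0 < \<beta> i \<and> \<beta> i < 1"
    and P_nonneg: "\<And>x u y. (\<forall>i. u i \<in> U i) \<Longrightarrow> 0 \<le> P x u y"
    and P_sum: "\<And>x u. (\<forall>i. u i \<in> U i) \<Longrightarrow> (\<Sum>y\<in>UNIV. P x u y) = 1"
begin

lemma finite_Pol_U: "finite (Pol U i :: ('x \<Rightarrow> 'u) set)"
  by (rule finite_Pol) (rule U_fin)

lemma Pol_U_nonempty: "(Pol U i :: ('x \<Rightarrow> 'u) set) \<noteq> {}"
  by (rule Pol_nonempty) (rule U_ne)

lemma finite_JPol_U: "finite (JPol U :: ('i \<Rightarrow> 'x \<Rightarrow> 'u) set)"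
  by (rule finite_JPol) (rule U_fin)

lemma policy_kernel_nonneg: "q \<in> JPol U \<Longrightarrow> 0 \<le> P x (\<lambda>j. q j x) y"
  by (simp add: P_nonneg JPol_action)

lemma policy_kernel_sum: "q \<in> JPol U \<Longrightarrow> (\<Sum>y\<in>UNIV. P x (\<lambda>j. q j x) y) = 1"
  by (simp add: P_sum JPol_action)

lemma policy_kernel_avg_le:
  assumes "q \<in> JPol U" and "\<And>z. f z \<le> a"
  shows "(\<Sum>z\<in>UNIV. P x (\<lambda>j. q j x) z * f z) \<le> a"
proof -
  have "(\<Sum>z\<in>UNIV. P x (\<lambda>j. q j x) z * f z) \<le> (\<Sum>z\<in>UNIV. P x (\<lambda>j. q j x) z * a)"
    using assms by (intro sum_mono mult_left_mono policy_kernel_nonneg)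
  also have "\<dots> = a"
    by (simp add: sum_distrib_right[symmetric] policy_kernel_sum assms(1))
  finally show ?thesis .
qed

lemma nstep_nonneg: "q \<in> JPol U \<Longrightarrow> 0 \<le> nstep P q n x y"
  by (induction n arbitrary: y) (auto intro!: sum_nonneg mult_nonneg_nonneg policy_kernel_nonneg)

lemma nstep_sum: "q \<in> JPol U \<Longrightarrow> (\<Sum>y\<in>UNIV. nstep P q n x y) = 1"
proof (induction n)
  case (Suc n)
  have "(\<Sum>y\<in>UNIV. nstep P q (Suc n) x y)
      = (\<Sum>z\<in>UNIV. nstep P q n x z * (\<Sum>y\<in>UNIV. P z (\<lambda>j. q j z) y))"
    by (simp add: sum_distrib_left) (rule sum.swap)
  then show ?case using Suc by (simp add: policy_kernel_sum)
qed simp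

lemma nstep_le_1: "q \<in> JPol U \<Longrightarrow> nstep P q n x y \<le> 1"
  using member_le_sum[of y UNIV "nstep P q n x"] by (simp add: nstep_nonneg nstep_sum)

definition cost_term :: "'i \<Rightarrow> ('i \<Rightarrow> 'x \<Rightarrow> 'u) \<Rightarrow> 'x \<Rightarrow> nat \<Rightarrow> real" where
  "cost_term i q x t = \<beta> i ^ t * (\<Sum>y\<in>UNIV. nstep P q t x y * c i y (\<lambda>j. q j y))"

lemma J_eq_suminf: "J \<beta> c P i q x = (\<Sum>t. cost_term i q x t)"
  by (simp add: J_def cost_term_def)

lemma summable_cost_term:
  assumes q: "q \<in> JPol U"
  shows "summable (cost_term i q x)"
proof (rule summable_comparison_test)
  let ?C = "\<Sum>y\<in>UNIV. \<bar>c i y (\<lambda>j. q j y)\<bar>"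
  have b: "0 \<le> \<beta> i" "\<beta> i < 1" using beta[of i] by auto
  have "norm (cost_term i q x t) \<le> ?C * \<beta> i ^ t" for t
  proof -
    have "\<bar>\<Sum>y\<in>UNIV. nstep P q t x y * c i y (\<lambda>j. q j y)\<bar> \<le> ?C"
      using q by (intro order_trans[OF sum_abs] sum_mono)
        (simp add: abs_mult nstep_nonneg nstep_le_1 mult_left_le_one_le)
    then show ?thesis
      using b by (simp add: cost_term_def abs_mult mult.commute mult_left_mono)
  qed
  then show "\<exists>N. \<forall>t\<ge>N. norm (cost_term i q x t) \<le> ?C * \<beta> i ^ t" by blast
  show "summable (\<lambda>t. ?C * \<beta> i ^ t)"
    using b by (intro summable_mult summable_geometric) simp
qed

definition bellman :: "'i \<Rightarrow> ('i \<Rightarrow> 'x \<Rightarrow> 'u) \<Rightarrow> ('x \<Rightarrow> real) \<Rightarrow> 'x \<Rightarrow> real" where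
  "bellman i q W x = c i x (\<lambda>j. q j x) + \<beta> i * (\<Sum>z\<in>UNIV. P x (\<lambda>j. q j x) z * W z)"

lemma bellman_J:
  assumes q: "q \<in> JPol U"
  shows "bellman i q (J \<beta> c P i q) x = J \<beta> c P i q x"
proof -
  let ?M = "\<lambda>z. P x (\<lambda>j. q j x) z"
  have s: "summable (cost_term i q z)" for z by (rule summable_cost_term[OF q])
  have Suc_term: "cost_term i q x (Suc t) = \<beta> i * (\<Sum>z\<in>UNIV. ?M z * cost_term i q z t)" for t
  proof -
    have "cost_term i q x (Suc t)
        = \<beta> i * \<beta> i ^ t * (\<Sum>y\<in>UNIV. \<Sum>z\<in>UNIV. ?M z * nstep P q t z y * c i y (\<lambda>j. q j y))"
      by (simp add: cost_term_def nstep_Suc_left sum_distrib_right del: nstep.simps)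
    also have "\<dots> = \<beta> i * (\<Sum>z\<in>UNIV. ?M z * cost_term i q z t)"
      by (subst sum.swap) (simp add: cost_term_def sum_distrib_left mult_ac)
    finally show ?thesis .
  qed
  have "J \<beta> c P i q x = cost_term i q x 0 + (\<Sum>t. cost_term i q x (Suc t))"
    using suminf_split_head[OF s] by (simp add: J_eq_suminf)
  also have "cost_term i q x 0 = c i x (\<lambda>j. q j x)"
    by (simp add: cost_term_def of_bool_def[symmetric])
  also have "(\<Sum>t. cost_term i q x (Suc t)) = \<beta> i * (\<Sum>t. \<Sum>z\<in>UNIV. ?M z * cost_term i q z t)"
    unfolding Suc_term by (intro suminf_mult summable_sum summable_mult s)
  also have "(\<Sum>t. \<Sum>z\<in>UNIV. ?M z * cost_term i q z t) = (\<Sum>z\<in>UNIV. ?M z * J \<beta> c P i q z)"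
    by (subst suminf_sum) (auto intro: summable_mult s simp: J_eq_suminf suminf_mult s)
  finally show ?thesis by (simp add: bellman_def)
qed

lemma bellman_diff:
  "bellman i q W x - bellman i q V x = \<beta> i * (\<Sum>z\<in>UNIV. P x (\<lambda>j. q j x) z * (W z - V z))"
  by (simp add: bellman_def right_diff_distrib sum_subtractf)

lemma discounted_max_principle:
  assumes q: "q \<in> JPol U" and E: "\<And>x. E x \<le> \<beta> i * (\<Sum>z\<in>UNIV. P x (\<lambda>j. q j x) z * E z)"
  shows "E x \<le> 0"
proof -
  have "Max (range E) \<in> range E" by (rule Max_in) auto
  then obtain x0 where x0: "E x0 = Max (range E)" by (metis imageE)
  then have max: "E z \<le> E x0" for z by simp
  have "E x0 \<le> \<beta> i * E x0"
    using E[of x0] policy_kernel_avg_le[OF q max] beta[of i]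
    by (meson less_imp_le mult_left_mono order_trans)
  then have "E x0 \<le> 0" using beta[of i] by (smt (verit) mult_le_cancel_right1)
  then show ?thesis using max[of x] by simp
qed

lemma J_ge_of_le_bellman:
  assumes q: "q \<in> JPol U" and W: "\<And>x. W x \<le> bellman i q W x"
  shows "W x \<le> J \<beta> c P i q x"
proof -
  have "W x - J \<beta> c P i q x \<le> 0"
  proof (rule discounted_max_principle[OF q])
    fix x
    show "W x - J \<beta> c P i q x \<le> \<beta> i * (\<Sum>z\<in>UNIV. P x (\<lambda>j. q j x) z * (W z - J \<beta> c P i q z))"
      using W[of x] bellman_J[OF q, of i x] bellman_diff[of i q W x "J \<beta> c P i q"] by linarith
  qed
  then show ?thesis by simp
qed

lemma J_le_of_bellman_le:
  assumes q: "q \<in> JPol U" and W: "\<And>x. bellman i q W x \<le> W x"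
  shows "J \<beta> c P i q x \<le> W x"
proof -
  have "J \<beta> c P i q x - W x \<le> 0"
  proof (rule discounted_max_principle[OF q])
    fix x
    show "J \<beta> c P i q x - W x \<le> \<beta> i * (\<Sum>z\<in>UNIV. P x (\<lambda>j. q j x) z * (J \<beta> c P i q z - W z))"
      using W[of x] bellman_J[OF q, of i x] bellman_diff[of i q "J \<beta> c P i q" x W] by linarith
  qed
  then show ?thesis by simp
qed

lemma J_less_of_bellman_less:
  assumes q: "q \<in> JPol U" and W: "\<And>x. bellman i q W x \<le> W x" and x0: "bellman i q W x0 < W x0"
  shows "J \<beta> c P i q x0 < W x0"
proof -
  have "(\<Sum>z\<in>UNIV. P x0 (\<lambda>j. q j x0) z * (J \<beta> c P i q z - W z)) \<le> 0"
    using J_le_of_bellman_le[OF q W] by (intro policy_kernel_avg_le[OF q]) simp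
  then have "bellman i q (J \<beta> c P i q) x0 - bellman i q W x0 \<le> 0"
    using beta[of i] by (simp add: bellman_diff mult_nonneg_nonpos)
  then show ?thesis using x0 bellman_J[OF q, of i x0] by linarith
qed

lemma improved_reply:
  assumes p: "p \<in> JPol U" and \<sigma>: "\<sigma> \<in> Pol U i" and \<sigma>': "\<sigma>' \<in> Pol U i"
    and x0: "bellman i (p(i := \<sigma>')) (J \<beta> c P i (p(i := \<sigma>))) x0 < J \<beta> c P i (p(i := \<sigma>)) x0"
  obtains \<sigma>'' where "\<sigma>'' \<in> Pol U i"
    and "\<And>x. J \<beta> c P i (p(i := \<sigma>'')) x \<le> J \<beta> c P i (p(i := \<sigma>)) x"
    and "J \<beta> c P i (p(i := \<sigma>'')) x0 < J \<beta> c P i (p(i := \<sigma>)) x0"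
proof -
  define W where "W = J \<beta> c P i (p(i := \<sigma>))"
  define better where "better z \<longleftrightarrow> bellman i (p(i := \<sigma>')) W z < W z" for z
  define \<sigma>'' where "\<sigma>'' z = (if better z then \<sigma>' z else \<sigma> z)" for z
  have \<sigma>'': "\<sigma>'' \<in> Pol U i" using \<sigma> \<sigma>' by (simp add: Pol_def \<sigma>''_def)
  have q'': "p(i := \<sigma>'') \<in> JPol U" by (rule JPol_update[OF p \<sigma>''])
  have "(\<lambda>j. (p(i := \<sigma>'')) j z)
      = (if better z then (\<lambda>j. (p(i := \<sigma>')) j z) else (\<lambda>j. (p(i := \<sigma>)) j z))" for z
    by (auto simp: \<sigma>''_def)
  then have "bellman i (p(i := \<sigma>'')) W z
      = (if better z then bellman i (p(i := \<sigma>')) W z else bellman i (p(i := \<sigma>)) W z)" for z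
    by (simp add: bellman_def)
  moreover have "bellman i (p(i := \<sigma>)) W z = W z" for z
    unfolding W_def by (rule bellman_J) (rule JPol_update[OF p \<sigma>])
  ultimately have le: "bellman i (p(i := \<sigma>'')) W z \<le> W z"
    and lt: "bellman i (p(i := \<sigma>'')) W x0 < W x0" for z
    using x0 by (auto simp: better_def W_def)
  show thesis
    using that[OF \<sigma>''] J_le_of_bellman_le[OF q'' le] J_less_of_bellman_less[OF q'' le lt]
    by (simp add: W_def)
qed

lemma ex_optimal_reply:
  assumes p: "p \<in> JPol U"
  obtains \<sigma> where "\<sigma> \<in> Pol U i"
    and "\<And>\<sigma>' x. \<sigma>' \<in> Pol U i \<Longrightarrow> J \<beta> c P i (p(i := \<sigma>)) x \<le> J \<beta> c P i (p(i := \<sigma>')) x"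
proof -
  define total where "total \<sigma> = (\<Sum>x\<in>UNIV. J \<beta> c P i (p(i := \<sigma>)) x)" for \<sigma>
  obtain \<sigma> where \<sigma>: "\<sigma> \<in> Pol U i" and min: "\<And>\<sigma>'. \<sigma>' \<in> Pol U i \<Longrightarrow> total \<sigma> \<le> total \<sigma>'"
    using ex_is_arg_min_if_finite[OF finite_Pol_U Pol_U_nonempty, of total]
    by (auto simp: is_arg_min_def not_less)
  have "J \<beta> c P i (p(i := \<sigma>)) x \<le> J \<beta> c P i (p(i := \<sigma>')) x" if \<sigma>': "\<sigma>' \<in> Pol U i" for \<sigma>' x
  proof (cases "\<forall>z. J \<beta> c P i (p(i := \<sigma>)) z \<le> bellman i (p(i := \<sigma>')) (J \<beta> c P i (p(i := \<sigma>))) z")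
    case True
    then show ?thesis by (intro J_ge_of_le_bellman[OF JPol_update[OF p \<sigma>']]) blast
  next
    case False
    then obtain x0 where x0:
      "bellman i (p(i := \<sigma>')) (J \<beta> c P i (p(i := \<sigma>))) x0 < J \<beta> c P i (p(i := \<sigma>)) x0"
      by (auto simp: not_le)
    obtain \<sigma>'' where \<sigma>'': "\<sigma>'' \<in> Pol U i"
      and le: "\<And>x. J \<beta> c P i (p(i := \<sigma>'')) x \<le> J \<beta> c P i (p(i := \<sigma>)) x"
      and lt: "J \<beta> c P i (p(i := \<sigma>'')) x0 < J \<beta> c P i (p(i := \<sigma>)) x0"
      using improved_reply[OF p \<sigma> \<sigma>' x0] by blast
    have "total \<sigma>'' < total \<sigma>"
      unfolding total_def by (rule sum_strict_mono_ex1) (use le lt in auto)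
    then show ?thesis using min[OF \<sigma>''] by simp
  qed
  with \<sigma> that show thesis by blast
qed

lemma BR_iff:
  "\<sigma> \<in> BR U \<beta> c P i p \<longleftrightarrow>
     \<sigma> \<in> Pol U i \<and> (\<forall>\<sigma>'\<in>Pol U i. \<forall>x. J \<beta> c P i (p(i := \<sigma>)) x \<le> J \<beta> c P i (p(i := \<sigma>')) x)"
proof -
  have "J \<beta> c P i (p(i := \<sigma>)) x = Min ((\<lambda>\<sigma>'. J \<beta> c P i (p(i := \<sigma>')) x) ` Pol U i)
      \<longleftrightarrow> (\<forall>\<sigma>'\<in>Pol U i. J \<beta> c P i (p(i := \<sigma>)) x \<le> J \<beta> c P i (p(i := \<sigma>')) x)"
    if "\<sigma> \<in> Pol U i" for x
    using that finite_Pol_U Pol_U_nonempty by (subst eq_commute, subst Min_eq_iff) auto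
  then show ?thesis unfolding BR_def by blast
qed

lemma BR_nonempty:
  assumes "p \<in> JPol U"
  shows "BR U \<beta> c P i p \<noteq> {}"
proof -
  obtain \<sigma> where "\<sigma> \<in> Pol U i"
    and "\<And>\<sigma>' x. \<sigma>' \<in> Pol U i \<Longrightarrow> J \<beta> c P i (p(i := \<sigma>)) x \<le> J \<beta> c P i (p(i := \<sigma>')) x"
    using ex_optimal_reply[OF assms, where i=i] by blast
  then have "\<sigma> \<in> BR U \<beta> c P i p" by (simp add: BR_iff)
  then show ?thesis by blast
qed

lemma strict_BR_not_BR:
  assumes "strict_BR U \<beta> c P i p \<sigma>"
  shows "p i \<notin> BR U \<beta> c P i p"
proof
  assume opt: "p i \<in> BR U \<beta> c P i p"
  obtain x where x: "J \<beta> c P i (p(i := \<sigma>)) x < J \<beta> c P i p x" and \<sigma>: "\<sigma> \<in> Pol U i"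
    using assms by (auto simp: strict_BR_def BR_iff)
  have "J \<beta> c P i (p(i := p i)) x \<le> J \<beta> c P i (p(i := \<sigma>)) x"
    using opt \<sigma> by (simp only: BR_iff)
  then show False using x by simp
qed

end

section \<open>The inertial update kernel\<close>

definition update_prob where
  "update_prob U \<beta> c P lam t i p \<sigma> =
     (1 - t) * Rker (lam i) \<sigma> (p i) (BR U \<beta> c P i p) + t * unif_pol U i \<sigma>"

lemma Amat_eq_prod:
  "Amat U \<beta> c P lam \<gamma> \<kappa> p q =
     (\<Prod>i\<in>UNIV. update_prob U \<beta> c P lam (if p \<in> Opt_set U \<beta> c P then \<gamma> i else \<kappa> i) i p (q i))"
  by (cases "p \<in> Opt_set U \<beta> c P") (simp_all add: Amat_def update_prob_def)

lemma Rker_nonneg: "0 \<le> l \<Longrightarrow> l \<le> 1 \<Longrightarrow> 0 \<le> Rker l \<sigma>' \<sigma> B"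
  by (simp add: Rker_def)

lemma sum_Rker:
  assumes A: "finite A" "\<sigma> \<in> A" and B: "B \<subseteq> A" "B \<noteq> {}"
  shows "(\<Sum>\<sigma>'\<in>A. Rker l \<sigma>' \<sigma> B) = 1"
proof (cases "\<sigma> \<in> B")
  case True
  then show ?thesis using A by (simp add: Rker_def)
next
  case False
  have "finite B" using A B finite_subset by blast
  then have "card B > 0" using B by (simp add: card_gt_0_iff)
  have "(\<Sum>\<sigma>'\<in>A. Rker l \<sigma>' \<sigma> B)
      = (\<Sum>\<sigma>'\<in>A. (if \<sigma>' = \<sigma> then l else 0) + (if \<sigma>' \<in> B then (1 - l) / card B else 0))"
    using False by (intro sum.cong) (auto simp: Rker_def)
  also have "\<dots> = l + (\<Sum>\<sigma>'\<in>B. (1 - l) / card B)"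
    using A B by (simp add: sum.distrib sum.inter_restrict[symmetric] Int_absorb1)
  finally show ?thesis using \<open>card B > 0\<close> by simp
qed

lemma Rker_lower_bound:
  assumes l: "0 \<le> l" "l \<le> 1" and A: "finite A" "B \<subseteq> A"
    and move: "\<sigma>' = \<sigma> \<or> (\<sigma> \<notin> B \<and> \<sigma>' \<in> B)"
  shows "min l ((1 - l) / card A) \<le> Rker l \<sigma>' \<sigma> B"
proof (cases "\<sigma>' = \<sigma>")
  case True
  then show ?thesis using l by (auto simp: Rker_def min_le_iff_disj)
next
  case False
  with move have "\<sigma> \<notin> B" "\<sigma>' \<in> B" by auto
  then have "0 < card B" "card B \<le> card A"
    using A by (auto simp: card_gt_0_iff card_mono finite_subset)
  then have "(1 - l) / card A \<le> (1 - l) / card B"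
    using l by (intro divide_left_mono) auto
  then show ?thesis using False \<open>\<sigma> \<notin> B\<close> \<open>\<sigma>' \<in> B\<close> by (simp add: Rker_def)
qed

locale inertial_dynamics = finite_discounted_game U \<beta> c P
  for U :: "'i::finite \<Rightarrow> 'u set"
    and \<beta> :: "'i \<Rightarrow> real"
    and c :: "'i \<Rightarrow> 'x::finite \<Rightarrow> ('i \<Rightarrow> 'u) \<Rightarrow> real"
    and P :: "'x \<Rightarrow> ('i \<Rightarrow> 'u) \<Rightarrow> 'x \<Rightarrow> real" +
  fixes lam :: "'i \<Rightarrow> real"
  assumes lam: "\<And>i. 0 < lam i \<and> lam i < 1"
begin

lemma update_prob_nonneg: "0 \<le> t \<Longrightarrow> t \<le> 1 \<Longrightarrow> 0 \<le> update_prob U \<beta> c P lam t i p \<sigma>"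
  using lam[of i] by (simp add: update_prob_def Rker_nonneg unif_pol_def)

lemma sum_update_prob:
  assumes p: "p \<in> JPol U"
  shows "(\<Sum>\<sigma>\<in>Pol U i. update_prob U \<beta> c P lam t i p \<sigma>) = 1"
proof -
  have "p i \<in> Pol U i" using p by (simp add: JPol_def)
  then have "(\<Sum>\<sigma>\<in>Pol U i. Rker (lam i) \<sigma> (p i) (BR U \<beta> c P i p)) = 1"
    using BR_nonempty[OF p] finite_Pol_U by (intro sum_Rker) (auto simp: BR_def)
  moreover have "(\<Sum>\<sigma>\<in>(Pol U i :: ('x \<Rightarrow> 'u) set). unif_pol U i \<sigma>) = 1"
    using finite_Pol_U Pol_U_nonempty by (simp add: unif_pol_def)
  ultimately show ?thesis by (simp add: update_prob_def sum.distrib sum_distrib_left[symmetric])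
qed

lemma Amat_nonneg:
  assumes "\<And>i. 0 \<le> \<gamma> i \<and> \<gamma> i \<le> 1" and "\<And>i. 0 \<le> \<kappa> i \<and> \<kappa> i \<le> 1"
  shows "0 \<le> Amat U \<beta> c P lam \<gamma> \<kappa> p q"
  unfolding Amat_eq_prod using assms by (intro prod_nonneg update_prob_nonneg) auto

lemma Amat_row_sum:
  assumes p: "p \<in> JPol U"
  shows "(\<Sum>q\<in>JPol U. Amat U \<beta> c P lam \<gamma> \<kappa> p q) = 1"
  unfolding Amat_eq_prod JPol_eq_PiE
  by (subst prod_sum_PiE[symmetric]) (simp_all add: finite_Pol_U sum_update_prob[OF p])

lemma Amat_ge_prod:
  assumes kb: "kb \<le> 1" and \<gamma>: "\<And>i. 0 \<le> \<gamma> i \<and> \<gamma> i \<le> kb" and \<kappa>: "\<And>i. 0 \<le> \<kappa> i \<and> \<kappa> i \<le> kb"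
    and r: "\<And>i. 0 \<le> r i \<and> r i \<le> Rker (lam i) (q i) (p i) (BR U \<beta> c P i p)"
  shows "(\<Prod>i\<in>UNIV. (1 - kb) * r i) \<le> Amat U \<beta> c P lam \<gamma> \<kappa> p q"
  unfolding Amat_eq_prod
proof (rule prod_mono, rule conjI)
  fix i
  define t where "t = (if p \<in> Opt_set U \<beta> c P then \<gamma> i else \<kappa> i)"
  have t: "0 \<le> t" "t \<le> kb" using \<gamma>[of i] \<kappa>[of i] by (auto simp: t_def)
  show "0 \<le> (1 - kb) * r i" using kb r[of i] by simp
  have "(1 - kb) * r i \<le> (1 - t) * Rker (lam i) (q i) (p i) (BR U \<beta> c P i p)"
    using r[of i] t kb by (intro mult_mono) auto
  also have "\<dots> \<le> update_prob U \<beta> c P lam t i p (q i)"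
    using t kb by (simp add: update_prob_def unif_pol_def)
  finally show "(1 - kb) * r i \<le> update_prob U \<beta> c P lam t i p (q i)" .
qed

lemma Amat_diag_ge:
  assumes kb: "kb \<le> 1" and \<gamma>: "\<And>i. 0 \<le> \<gamma> i \<and> \<gamma> i \<le> kb" and \<kappa>: "\<And>i. 0 \<le> \<kappa> i \<and> \<kappa> i \<le> kb"
    and p: "p \<in> Eq_set U \<beta> c P"
  shows "(1 - kb) ^ card (UNIV :: 'i set) \<le> Amat U \<beta> c P lam \<gamma> \<kappa> p p"
  using Amat_ge_prod[OF kb \<gamma> \<kappa>, of "\<lambda>_. 1"] p by (simp add: Eq_set_def Rker_def)

text \<open>Lower bound for the probability that a decision maker either keeps its policy or, if that is
  not a best reply, switches to a prescribed best reply.\<close>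

definition move_weight :: "'i \<Rightarrow> real" where
  "move_weight i = min (lam i) ((1 - lam i) / card (Pol U i :: ('x \<Rightarrow> 'u) set))"

lemma move_weight_bounds: "0 < move_weight i \<and> move_weight i \<le> 1"
  unfolding move_weight_def using lam[of i] finite_Pol_U Pol_U_nonempty
  by (auto simp: card_gt_0_iff min_le_iff_disj)

lemma Amat_strict_BR_step_ge:
  assumes kb: "kb \<le> 1" and \<gamma>: "\<And>i. 0 \<le> \<gamma> i \<and> \<gamma> i \<le> kb" and \<kappa>: "\<And>i. 0 \<le> \<kappa> i \<and> \<kappa> i \<le> kb"
    and step: "\<And>i. q i \<noteq> p i \<Longrightarrow> strict_BR U \<beta> c P i p (q i)"
  shows "(\<Prod>i\<in>UNIV. (1 - kb) * move_weight i) \<le> Amat U \<beta> c P lam \<gamma> \<kappa> p q"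
proof (rule Amat_ge_prod[OF kb \<gamma> \<kappa>], rule conjI)
  fix i
  show "0 \<le> move_weight i"
    using move_weight_bounds[of i] by simp
  have "q i = p i \<or> (p i \<notin> BR U \<beta> c P i p \<and> q i \<in> BR U \<beta> c P i p)"
    using step[of i] strict_BR_not_BR[of i p "q i"] by (auto simp: strict_BR_def)
  then show "move_weight i \<le> Rker (lam i) (q i) (p i) (BR U \<beta> c P i p)"
    unfolding move_weight_def using lam[of i] finite_Pol_U
    by (intro Rker_lower_bound) (auto simp: BR_def)
qed

end

section \<open>Concentration of a finite Markov chain on a target set\<close>

lemma successively_iff_nth:
  "successively R xs \<longleftrightarrow> (\<forall>k. Suc k < length xs \<longrightarrow> R (xs ! k) (xs ! Suc k))"
proof (induction xs rule: induct_list012)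
  case (3 x y zs)
  have "(\<forall>k. Suc k < length (x # y # zs) \<longrightarrow> R ((x # y # zs) ! k) ((x # y # zs) ! Suc k))
      \<longleftrightarrow> R x y \<and> (\<forall>k. Suc k < length (y # zs) \<longrightarrow> R ((y # zs) ! k) ((y # zs) ! Suc k))"
    (is "?L \<longleftrightarrow> ?R")
  proof
    assume ?L
    then show ?R by (metis Suc_less_eq length_Cons nth_Cons_0 nth_Cons_Suc zero_less_Suc)
  next
    assume ?R
    then show ?L by (metis Suc_less_eq length_Cons nth_Cons_0 nth_Cons_Suc not0_implies_Suc)
  qed
  with "3.IH"(2) show ?case by simp
qed auto

lemma mulA_cong: "(\<And>p. p \<in> JPol U \<Longrightarrow> \<nu> p = \<nu>' p) \<Longrightarrow> mulA U A \<nu> = mulA U A \<nu>'"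
  unfolding mulA_def by (intro ext sum.cong) auto

lemma stationary_funpow_mulA:
  assumes "stationary U A \<mu>" and "q \<in> JPol U"
  shows "(mulA U A ^^ n) \<mu> q = \<mu> q"
  using assms(2)
proof (induction n arbitrary: q)
  case (Suc n)
  have "(mulA U A ^^ Suc n) \<mu> = mulA U A \<mu>"
    unfolding funpow.simps o_apply by (rule mulA_cong) (rule Suc.IH)
  then show ?case using assms(1) Suc.prems by (simp add: stationary_def)
qed simp

fun prob_in_after :: "('p \<Rightarrow> 'p \<Rightarrow> real) \<Rightarrow> 'p set \<Rightarrow> 'p set \<Rightarrow> nat \<Rightarrow> 'p \<Rightarrow> real" where
  "prob_in_after A S E 0 p = (if p \<in> E then 1 else 0)"
| "prob_in_after A S E (Suc n) p = (\<Sum>q\<in>S. A p q * prob_in_after A S E n q)"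

locale finite_markov_chain =
  fixes U :: "'i \<Rightarrow> 'u set" and A :: "('i \<Rightarrow> 'x \<Rightarrow> 'u) \<Rightarrow> ('i \<Rightarrow> 'x \<Rightarrow> 'u) \<Rightarrow> real"
  assumes finite_states: "finite (JPol U :: ('i \<Rightarrow> 'x \<Rightarrow> 'u) set)"
    and nonneg: "\<And>p q. 0 \<le> A p q"
    and row_sum: "\<And>p. p \<in> JPol U \<Longrightarrow> (\<Sum>q\<in>JPol U. A p q) = 1"
begin

lemma funpow_mulA_nonneg:
  "(\<And>p. p \<in> JPol U \<Longrightarrow> 0 \<le> \<nu> p) \<Longrightarrow> q \<in> JPol U \<Longrightarrow> 0 \<le> (mulA U A ^^ n) \<nu> q"
  by (induction n arbitrary: q) (auto simp: mulA_def nonneg intro!: sum_nonneg)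

lemma sum_mulA: "(\<Sum>q\<in>JPol U. mulA U A \<nu> q) = (\<Sum>p\<in>JPol U. \<nu> p)"
proof -
  have "(\<Sum>q\<in>JPol U. mulA U A \<nu> q) = (\<Sum>p\<in>JPol U. \<nu> p * (\<Sum>q\<in>JPol U. A p q))"
    unfolding mulA_def by (simp add: sum_distrib_left) (rule sum.swap)
  then show ?thesis by (simp add: row_sum)
qed

lemma sum_funpow_mulA: "(\<Sum>q\<in>JPol U. (mulA U A ^^ n) \<nu> q) = (\<Sum>p\<in>JPol U. \<nu> p)"
  by (induction n) (simp_all add: sum_mulA)

lemma sum_funpow_mulA_target:
  assumes E: "E \<subseteq> JPol U"
  shows "(\<Sum>q\<in>E. (mulA U A ^^ n) \<nu> q) = (\<Sum>p\<in>JPol U. \<nu> p * prob_in_after A (JPol U) E n p)"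
proof (induction n arbitrary: \<nu>)
  case 0
  have "(\<Sum>p\<in>JPol U. \<nu> p * prob_in_after A (JPol U) E 0 p) = (\<Sum>p\<in>JPol U \<inter> E. \<nu> p)"
    by (simp add: sum.inter_restrict[OF finite_states] if_distrib cong: if_cong)
  then show ?case using E by (simp add: Int_absorb1)
next
  case (Suc n)
  have "(\<Sum>q\<in>E. (mulA U A ^^ Suc n) \<nu> q) = (\<Sum>q\<in>E. (mulA U A ^^ n) (mulA U A \<nu>) q)"
    by (simp add: funpow_Suc_right del: funpow.simps)
  also have "\<dots> = (\<Sum>p\<in>JPol U. mulA U A \<nu> p * prob_in_after A (JPol U) E n p)"
    by (rule Suc.IH)
  also have "\<dots> = (\<Sum>p\<in>JPol U. \<nu> p * prob_in_after A (JPol U) E (Suc n) p)"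
    unfolding mulA_def by (simp add: sum_distrib_left sum_distrib_right mult.assoc) (rule sum.swap)
  finally show ?case .
qed

lemma prob_in_after_bounds:
  "p \<in> JPol U \<Longrightarrow> 0 \<le> prob_in_after A (JPol U) E n p \<and> prob_in_after A (JPol U) E n p \<le> 1"
proof (induction n arbitrary: p)
  case (Suc n)
  have "prob_in_after A (JPol U) E (Suc n) p \<le> (\<Sum>q\<in>JPol U. A p q)"
    using Suc.IH by (auto intro!: sum_mono mult_left_le nonneg)
  then show ?case
    using Suc.IH row_sum[OF Suc.prems] by (auto intro!: sum_nonneg simp: nonneg)
qed simp

lemma prob_in_after_Suc_ge:
  assumes "p \<in> JPol U" "q \<in> JPol U"
  shows "A p q * prob_in_after A (JPol U) E n q \<le> prob_in_after A (JPol U) E (Suc n) p"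
  using assms finite_states
  by (simp, intro member_le_sum[where f="\<lambda>q. A p q * prob_in_after A (JPol U) E n q"])
     (auto simp: nonneg prob_in_after_bounds)

lemma prob_in_after_diag_ge:
  assumes "p \<in> E" "E \<subseteq> JPol U" and "0 \<le> s" "s \<le> A p p"
  shows "s ^ n \<le> prob_in_after A (JPol U) E n p"
proof (induction n)
  case (Suc n)
  have "s ^ Suc n \<le> A p p * prob_in_after A (JPol U) E n p"
    using Suc assms(3,4) by (simp add: mult_mono)
  also have "\<dots> \<le> prob_in_after A (JPol U) E (Suc n) p"
    using assms(1,2) by (intro prob_in_after_Suc_ge) auto
  finally show ?case .
qed (use assms(1) in simp)

lemma prob_in_after_path_ge:
  assumes a: "0 \<le> a" and E: "\<And>p n. p \<in> E \<Longrightarrow> a ^ n \<le> prob_in_after A (JPol U) E n p"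
    and ps: "successively (\<lambda>p q. a \<le> A p q) ps" "set ps \<subseteq> JPol U" "ps \<noteq> []" "last ps \<in> E"
      "length ps \<le> Suc n"
  shows "a ^ n \<le> prob_in_after A (JPol U) E n (hd ps)"
  using ps
proof (induction ps arbitrary: n rule: induct_list012)
  case (3 x y zs)
  then obtain n' where n: "n = Suc n'" by (cases n) auto
  have "a ^ n' \<le> prob_in_after A (JPol U) E n' y"
    using "3.IH"(2)[of n'] "3.prems" n by simp
  then have "a * a ^ n' \<le> A x y * prob_in_after A (JPol U) E n' y"
    using "3.prems"(1) a by (intro mult_mono) (auto simp: prob_in_after_bounds)
  also have "\<dots> \<le> prob_in_after A (JPol U) E (Suc n') x"
    using "3.prems"(2) by (intro prob_in_after_Suc_ge) auto
  finally show ?case by (simp add: n)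
qed (use E in auto)

lemma mass_outside_after_block:
  assumes E: "E \<subseteq> JPol U"
    and in_E: "\<And>p. p \<in> E \<Longrightarrow> s \<le> prob_in_after A (JPol U) E L p"
    and out_E: "\<And>p. p \<in> JPol U - E \<Longrightarrow> \<delta> \<le> prob_in_after A (JPol U) E L p"
    and s: "s \<le> 1"
    and \<nu>: "\<And>p. p \<in> JPol U \<Longrightarrow> 0 \<le> \<nu> p" "(\<Sum>p\<in>JPol U. \<nu> p) = 1"
  shows "(\<Sum>q\<in>JPol U - E. (mulA U A ^^ L) \<nu> q) \<le> (1 - s) + (1 - \<delta>) * (\<Sum>q\<in>JPol U - E. \<nu> q)"
proof -
  have split: "(\<Sum>q\<in>JPol U. h q) = (\<Sum>q\<in>JPol U - E. h q) + (\<Sum>q\<in>E. h q)" for h :: "_ \<Rightarrow> real"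
    by (rule sum.subset_diff[OF E finite_states])
  define f where "f = (\<Sum>q\<in>E. \<nu> q)"
  define g where "g = (\<Sum>q\<in>JPol U - E. \<nu> q)"
  have fg: "f = 1 - g" using \<nu>(2) split[of \<nu>] by (simp add: f_def g_def)
  have g: "0 \<le> g" unfolding g_def using \<nu>(1) by (auto intro: sum_nonneg)
  have "\<delta> * g + s * f
      \<le> (\<Sum>p\<in>JPol U - E. \<nu> p * prob_in_after A (JPol U) E L p)
        + (\<Sum>p\<in>E. \<nu> p * prob_in_after A (JPol U) E L p)"
    unfolding f_def g_def sum_distrib_left
    using \<nu>(1) E in_E out_E
    by (intro add_mono sum_mono) (auto intro!: mult_left_mono simp: mult.commute[of \<delta>] mult.commute[of s])
  also have "\<dots> = (\<Sum>q\<in>E. (mulA U A ^^ L) \<nu> q)"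
    by (simp add: sum_funpow_mulA_target[OF E] split[symmetric])
  finally have "\<delta> * g + s * f \<le> (\<Sum>q\<in>E. (mulA U A ^^ L) \<nu> q)" .
  moreover have "(\<Sum>q\<in>JPol U - E. (mulA U A ^^ L) \<nu> q) + (\<Sum>q\<in>E. (mulA U A ^^ L) \<nu> q) = 1"
    using sum_funpow_mulA[of L \<nu>] split[of "(mulA U A ^^ L) \<nu>"] \<nu>(2) by simp
  moreover have "s * g \<le> g" using mult_left_le[OF s g] by (simp add: mult.commute)
  ultimately show ?thesis unfolding g_def[symmetric] fg by (simp add: algebra_simps)
qed

lemma mass_outside_after_blocks:
  assumes E: "E \<subseteq> JPol U"
    and in_E: "\<And>p. p \<in> E \<Longrightarrow> s \<le> prob_in_after A (JPol U) E L p"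
    and out_E: "\<And>p. p \<in> JPol U - E \<Longrightarrow> \<delta> \<le> prob_in_after A (JPol U) E L p"
    and s: "s \<le> 1" and \<delta>: "0 < \<delta>" "\<delta> \<le> 1"
    and \<nu>: "\<And>p. p \<in> JPol U \<Longrightarrow> 0 \<le> \<nu> p" "(\<Sum>p\<in>JPol U. \<nu> p) = 1"
  shows "(\<Sum>q\<in>JPol U - E. (mulA U A ^^ (L * r)) \<nu> q)
    \<le> (1 - \<delta>) ^ r * (\<Sum>q\<in>JPol U - E. \<nu> q) + (1 - s) / \<delta>"
proof (induction r)
  case 0
  show ?case using s \<delta> by simp
next
  case (Suc r)
  define \<nu>' where "\<nu>' = (mulA U A ^^ (L * r)) \<nu>"
  have "(\<Sum>q\<in>JPol U - E. (mulA U A ^^ (L * Suc r)) \<nu> q) = (\<Sum>q\<in>JPol U - E. (mulA U A ^^ L) \<nu>' q)"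
    by (simp add: \<nu>'_def funpow_add)
  also have "\<dots> \<le> (1 - s) + (1 - \<delta>) * (\<Sum>q\<in>JPol U - E. \<nu>' q)"
    unfolding \<nu>'_def using \<nu>
    by (intro mass_outside_after_block[OF E in_E out_E s]) (auto simp: funpow_mulA_nonneg sum_funpow_mulA)
  also have "\<dots> \<le> (1 - s) + (1 - \<delta>) * ((1 - \<delta>) ^ r * (\<Sum>q\<in>JPol U - E. \<nu> q) + (1 - s) / \<delta>)"
    using Suc.IH \<delta> unfolding \<nu>'_def by (intro add_left_mono mult_left_mono) auto
  also have "\<dots> = (1 - \<delta>) ^ Suc r * (\<Sum>q\<in>JPol U - E. \<nu> q) + (1 - s) / \<delta>"
    using \<delta> by (simp add: field_simps)
  finally show ?case .
qed

lemma mass_outside_le: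
  assumes E: "E \<subseteq> JPol U" and a: "0 < a" "a \<le> s" "s \<le> 1"
    and diag: "\<And>p. p \<in> E \<Longrightarrow> s \<le> A p p"
    and paths: "\<And>p. p \<in> JPol U \<Longrightarrow> \<exists>ps. ps \<noteq> [] \<and> hd ps = p \<and> set ps \<subseteq> JPol U \<and> last ps \<in> E
      \<and> length ps \<le> Suc L \<and> successively (\<lambda>p q. a \<le> A p q) ps"
    and \<nu>: "\<And>p. p \<in> JPol U \<Longrightarrow> 0 \<le> \<nu> p" "(\<Sum>p\<in>JPol U. \<nu> p) = 1"
    and m: "L * r \<le> m"
  shows "(\<Sum>q\<in>JPol U - E. (mulA U A ^^ m) \<nu> q) \<le> (1 - a ^ L) ^ r + (1 - s ^ L) / a ^ L"
proof -
  have in_E: "s ^ n \<le> prob_in_after A (JPol U) E n p" if "p \<in> E" for p n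
    using prob_in_after_diag_ge[OF that E _ diag[OF that]] a by simp
  have "a ^ n \<le> prob_in_after A (JPol U) E n p" if "p \<in> E" for p n
    using in_E[OF that, of n] power_mono[OF a(2), of n] a(1) by simp
  then have out_E: "a ^ L \<le> prob_in_after A (JPol U) E L p" if "p \<in> JPol U - E" for p
    using paths[of p] that a(1) prob_in_after_path_ge[of a E] by force
  define \<nu>' where "\<nu>' = (mulA U A ^^ (m - L * r)) \<nu>"
  have \<nu>': "\<And>p. p \<in> JPol U \<Longrightarrow> 0 \<le> \<nu>' p" "(\<Sum>p\<in>JPol U. \<nu>' p) = 1"
    unfolding \<nu>'_def using \<nu> by (auto simp: funpow_mulA_nonneg sum_funpow_mulA)
  have "(\<Sum>q\<in>JPol U - E. \<nu>' q) \<le> (\<Sum>q\<in>JPol U. \<nu>' q)"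
    using \<nu>'(1) finite_states by (intro sum_mono2) auto
  then have mass: "(\<Sum>q\<in>JPol U - E. \<nu>' q) \<le> 1" using \<nu>'(2) by simp
  have "a ^ L \<le> 1" using a by (simp add: power_le_one)
  have "m = L * r + (m - L * r)" using m by simp
  then have "(mulA U A ^^ m) \<nu> = (mulA U A ^^ (L * r)) \<nu>'"
    unfolding \<nu>'_def by (metis comp_apply funpow_add)
  then have "(\<Sum>q\<in>JPol U - E. (mulA U A ^^ m) \<nu> q)
      \<le> (1 - a ^ L) ^ r * (\<Sum>q\<in>JPol U - E. \<nu>' q) + (1 - s ^ L) / a ^ L"
    using mass_outside_after_blocks[OF E in_E out_E _ _ _ \<nu>'] a \<open>a ^ L \<le> 1\<close>
    by (simp add: power_le_one)
  also have "\<dots> \<le> (1 - a ^ L) ^ r + (1 - s ^ L) / a ^ L"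
    using mass \<open>a ^ L \<le> 1\<close> by (simp add: mult_left_le)
  finally show ?thesis .
qed

end

section \<open>Concentration of the update dynamics on equilibria\<close>

lemma one_minus_power_le: "0 \<le> x \<Longrightarrow> x \<le> 1 \<Longrightarrow> 1 - (1 - x) ^ n \<le> real n * x"
  using Bernoulli_inequality[of "- x" n] by simp

context finite_discounted_game
begin

lemma sbr_paths_bounded:
  assumes WA: "weakly_acyclic U \<beta> c P"
  obtains L where "\<And>p. p \<in> JPol U \<Longrightarrow> \<exists>ps. ps \<noteq> [] \<and> hd ps = p \<and> sbr_path U \<beta> c P ps
    \<and> last ps \<in> Eq_set U \<beta> c P \<and> length ps \<le> Suc L"
proof -
  obtain path where path: "\<And>p. p \<in> JPol U \<Longrightarrow> path p \<noteq> [] \<and> hd (path p) = p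
      \<and> sbr_path U \<beta> c P (path p) \<and> last (path p) \<in> Eq_set U \<beta> c P"
    using WA unfolding weakly_acyclic_def by metis
  have "length (path p) \<le> Max (length ` path ` JPol U)" if "p \<in> JPol U" for p
    using finite_JPol_U that by (intro Max_ge) auto
  with path show thesis by (intro that[of "Max (length ` path ` JPol U)"]) (meson le_SucI)
qed

end

context inertial_dynamics
begin

text \<open>The factor \<open>1/2\<close> absorbs the experimentation factor \<open>1 - kb\<close> for \<open>kb \<le> 1/2\<close>.\<close>

definition min_step_prob :: real where
  "min_step_prob = (\<Prod>i\<in>UNIV. move_weight i / 2)"

lemma min_step_prob_pos: "0 < min_step_prob"
  unfolding min_step_prob_def using move_weight_bounds by (intro prod_pos) simp

lemma min_step_prob_le_diag:
  assumes "0 \<le> kb" "kb \<le> 1/2"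
  shows "min_step_prob \<le> (1 - kb) ^ card (UNIV :: 'i set)"
proof -
  have "min_step_prob \<le> (\<Prod>i\<in>(UNIV :: 'i set). 1 - kb)"
    unfolding min_step_prob_def using move_weight_bounds assms
    by (intro prod_mono) (smt (verit) field_sum_of_halves)
  then show ?thesis by simp
qed

lemma min_step_prob_le_Amat:
  assumes kb: "kb \<le> 1/2" and \<gamma>: "\<And>i. 0 \<le> \<gamma> i \<and> \<gamma> i \<le> kb" and \<kappa>: "\<And>i. 0 \<le> \<kappa> i \<and> \<kappa> i \<le> kb"
    and step: "\<And>i. q i \<noteq> p i \<Longrightarrow> strict_BR U \<beta> c P i p (q i)"
  shows "min_step_prob \<le> Amat U \<beta> c P lam \<gamma> \<kappa> p q"
proof -
  have "min_step_prob \<le> (\<Prod>i\<in>UNIV. (1 - kb) * move_weight i)"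
    unfolding min_step_prob_def using move_weight_bounds kb
    by (intro prod_mono) (auto simp: less_imp_le intro: mult_right_mono)
  also have "\<dots> \<le> Amat U \<beta> c P lam \<gamma> \<kappa> p q"
    using kb by (intro Amat_strict_BR_step_ge \<gamma> \<kappa> step) auto
  finally show ?thesis .
qed

lemma Eq_set_mass_ge_fixed_noise:
  fixes kb :: real
  assumes paths: "\<And>p. p \<in> JPol U \<Longrightarrow> \<exists>ps. ps \<noteq> [] \<and> hd ps = p \<and> sbr_path U \<beta> c P ps
      \<and> last ps \<in> Eq_set U \<beta> c P \<and> length ps \<le> Suc L"
    and kb: "0 \<le> kb" "kb \<le> 1/2"
    and \<gamma>: "\<And>i. 0 \<le> \<gamma> i \<and> \<gamma> i \<le> kb" and \<kappa>: "\<And>i. 0 \<le> \<kappa> i \<and> \<kappa> i \<le> kb"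
    and \<nu>: "is_dist U \<nu>" and m: "L * r \<le> m"
  shows "1 - (1 - min_step_prob ^ L) ^ r - real (card (UNIV :: 'i set) * L) * kb / min_step_prob ^ L
    \<le> sum ((mulA U (Amat U \<beta> c P lam \<gamma> \<kappa>) ^^ m) \<nu>) (Eq_set U \<beta> c P)"
proof -
  define A where "A = Amat U \<beta> c P lam \<gamma> \<kappa>"
  define E where "E = Eq_set U \<beta> c P"
  define s where "s = (1 - kb) ^ card (UNIV :: 'i set)"
  have E: "E \<subseteq> JPol U" by (auto simp: E_def Eq_set_def)
  have noise: "0 \<le> \<gamma> i \<and> \<gamma> i \<le> 1" "0 \<le> \<kappa> i \<and> \<kappa> i \<le> 1" for i
    using \<gamma>[of i] \<kappa>[of i] kb by auto
  interpret finite_markov_chain U A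
    using finite_JPol_U Amat_row_sum Amat_nonneg[OF noise] by unfold_locales (auto simp: A_def)
  have diag: "s \<le> A p p" if "p \<in> E" for p
    unfolding A_def s_def using that kb \<gamma> \<kappa> by (intro Amat_diag_ge) (auto simp: E_def)
  have "\<exists>ps. ps \<noteq> [] \<and> hd ps = p \<and> set ps \<subseteq> JPol U \<and> last ps \<in> E \<and> length ps \<le> Suc L
      \<and> successively (\<lambda>p q. min_step_prob \<le> A p q) ps" if "p \<in> JPol U" for p
    using paths[OF that] kb \<gamma> \<kappa>
    by (auto simp: sbr_path_def successively_iff_nth E_def A_def intro!: min_step_prob_le_Amat)
  then have "(\<Sum>q\<in>JPol U - E. (mulA U A ^^ m) \<nu> q)
      \<le> (1 - min_step_prob ^ L) ^ r + (1 - s ^ L) / min_step_prob ^ L"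
    using \<nu> min_step_prob_pos min_step_prob_le_diag[OF kb] s_def kb
    by (intro mass_outside_le[OF E _ _ _ diag _ _ _ m]) (auto simp: is_dist_def power_le_one)
  moreover have leak: "1 - s ^ L \<le> real (card (UNIV :: 'i set) * L) * kb"
    using one_minus_power_le[of kb "card (UNIV :: 'i set) * L"] kb by (simp add: s_def power_mult)
  moreover have "(\<Sum>q\<in>JPol U - E. (mulA U A ^^ m) \<nu> q) + (\<Sum>q\<in>E. (mulA U A ^^ m) \<nu> q) = 1"
    using sum.subset_diff[OF E finite_JPol_U, of "(mulA U A ^^ m) \<nu>"] sum_funpow_mulA[of m \<nu>] \<nu>
    by (simp add: is_dist_def)
  moreover have "(1 - s ^ L) / min_step_prob ^ L
      \<le> real (card (UNIV :: 'i set) * L) * kb / min_step_prob ^ L"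
    using leak min_step_prob_pos by (intro divide_right_mono) auto
  ultimately have "1 - (1 - min_step_prob ^ L) ^ r - real (card (UNIV :: 'i set) * L) * kb / min_step_prob ^ L
      \<le> (\<Sum>q\<in>E. (mulA U A ^^ m) \<nu> q)"
    by linarith
  then show ?thesis by (simp add: A_def E_def)
qed

lemma Eq_set_mass_ge:
  assumes WA: "weakly_acyclic U \<beta> c P" and \<epsilon>: "0 < \<epsilon>"
  obtains kb mb where "0 < kb" "kb < 1"
    and "\<And>\<gamma> \<kappa> m \<nu>. \<forall>i. 0 < \<gamma> i \<and> 0 < \<kappa> i \<and> max (\<gamma> i) (\<kappa> i) < kb \<Longrightarrow> mb \<le> m \<Longrightarrow>
      is_dist U \<nu> \<Longrightarrow> 1 - \<epsilon> / 4 \<le> sum ((mulA U (Amat U \<beta> c P lam \<gamma> \<kappa>) ^^ m) \<nu>) (Eq_set U \<beta> c P)"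
proof -
  obtain L where paths: "\<And>p. p \<in> JPol U \<Longrightarrow> \<exists>ps. ps \<noteq> [] \<and> hd ps = p \<and> sbr_path U \<beta> c P ps
      \<and> last ps \<in> Eq_set U \<beta> c P \<and> length ps \<le> Suc L"
    using sbr_paths_bounded[OF WA] by blast
  define \<delta> where "\<delta> = min_step_prob ^ L"
  have \<delta>: "0 < \<delta>" "\<delta> \<le> 1"
    using min_step_prob_pos min_step_prob_le_diag[of 0] by (auto simp: \<delta>_def power_le_one)
  obtain r where r: "(1 - \<delta>) ^ r < \<epsilon> / 8"
    using real_arch_pow_inv[of "\<epsilon> / 8" "1 - \<delta>"] \<epsilon> \<delta> by auto
  define NL where "NL = real (card (UNIV :: 'i set) * L)"
  have NL: "0 \<le> NL" by (simp add: NL_def)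
  define kb where "kb = min (1/2) (\<delta> * \<epsilon> / (8 * (NL + 1)))"
  have "0 < \<delta> * \<epsilon> / (8 * (NL + 1))" using \<delta> \<epsilon> NL by simp
  then have kb: "0 < kb" "kb \<le> 1/2" unfolding kb_def by (auto simp: min_def)
  have "NL * kb \<le> (NL + 1) * (\<delta> * \<epsilon> / (8 * (NL + 1)))"
    using kb NL \<delta> \<epsilon> unfolding kb_def by (intro mult_mono) auto
  also have "\<dots> = \<delta> * \<epsilon> / 8" using NL by (simp add: field_simps)
  finally have leak: "NL * kb / \<delta> \<le> \<epsilon> / 8"
    using \<delta> by (simp add: pos_divide_le_eq mult.commute)
  show thesis
  proof (rule that[of kb "L * r"])
    fix \<gamma> \<kappa> :: "'i \<Rightarrow> real" and m :: nat and \<nu> :: "('i \<Rightarrow> 'x \<Rightarrow> 'u) \<Rightarrow> real"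
    assume "\<forall>i. 0 < \<gamma> i \<and> 0 < \<kappa> i \<and> max (\<gamma> i) (\<kappa> i) < kb" "L * r \<le> m" "is_dist U \<nu>"
    then have "1 - (1 - \<delta>) ^ r - NL * kb / \<delta>
        \<le> sum ((mulA U (Amat U \<beta> c P lam \<gamma> \<kappa>) ^^ m) \<nu>) (Eq_set U \<beta> c P)"
      unfolding \<delta>_def NL_def using kb
      by (intro Eq_set_mass_ge_fixed_noise[OF paths]) (auto simp: less_imp_le)
    then show "1 - \<epsilon> / 4 \<le> sum ((mulA U (Amat U \<beta> c P lam \<gamma> \<kappa>) ^^ m) \<nu>) (Eq_set U \<beta> c P)"
      using r leak by linarith
  qed (use kb in auto)
qed

end

theorem lemma3:
  fixes U :: "'i::finite \<Rightarrow> 'u set"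
    and \<beta> :: "'i \<Rightarrow> real"
    and c :: "'i \<Rightarrow> 'x::finite \<Rightarrow> ('i \<Rightarrow> 'u) \<Rightarrow> real"
    and P :: "'x \<Rightarrow> ('i \<Rightarrow> 'u) \<Rightarrow> 'x \<Rightarrow> real"
    and lam :: "'i \<Rightarrow> real"
  assumes U_fin: "\<And>i. finite (U i)" and U_ne: "\<And>i. U i \<noteq> {}"
    and beta: "\<And>i. 0 < \<beta> i \<and> \<beta> i < 1"
    and P_nonneg: "\<And>x u y. (\<forall>i. u i \<in> U i) \<Longrightarrow> 0 \<le> P x u y"
    and P_sum: "\<And>x u. (\<forall>i. u i \<in> U i) \<Longrightarrow> (\<Sum>y\<in>UNIV. P x u y) = 1"
    and WA: "weakly_acyclic U \<beta> c P"
    and lam: "\<And>i. 0 < lam i \<and> lam i < 1"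
  shows "\<forall>\<epsilon>>0. \<exists>kb. 0 < kb \<and> kb < 1 \<and>
     (\<forall>\<gamma> \<kappa>. (\<forall>i. 0 < \<gamma> i \<and> 0 < \<kappa> i \<and> max (\<gamma> i) (\<kappa> i) < kb) \<longrightarrow>
        (\<forall>\<mu>. stationary U (Amat U \<beta> c P lam \<gamma> \<kappa>) \<mu> \<longrightarrow>
              sum \<mu> (Eq_set U \<beta> c P) \<ge> 1 - \<epsilon> / 4)) \<and>
     (\<exists>mb::nat. \<forall>\<gamma> \<kappa>. (\<forall>i. 0 < \<gamma> i \<and> 0 < \<kappa> i \<and> max (\<gamma> i) (\<kappa> i) < kb) \<longrightarrow>
        (\<forall>m\<ge>mb. \<forall>\<mu>0. is_dist U \<mu>0 \<longrightarrow>
           sum ((mulA U (Amat U \<beta> c P lam \<gamma> \<kappa>) ^^ m) \<mu>0) (Eq_set U \<beta> c P) \<ge> 1 - \<epsilon> / 2))"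
proof (intro allI impI, goal_cases)
  case (1 \<epsilon>)
  interpret inertial_dynamics U \<beta> c P lam
    using U_fin U_ne beta P_nonneg P_sum lam by unfold_locales auto
  obtain kb mb where kb: "0 < kb" "kb < 1"
    and mass: "\<And>\<gamma> \<kappa> m \<nu>. \<forall>i. 0 < \<gamma> i \<and> 0 < \<kappa> i \<and> max (\<gamma> i) (\<kappa> i) < kb \<Longrightarrow> mb \<le> m \<Longrightarrow>
      is_dist U \<nu> \<Longrightarrow> 1 - \<epsilon> / 4 \<le> sum ((mulA U (Amat U \<beta> c P lam \<gamma> \<kappa>) ^^ m) \<nu>) (Eq_set U \<beta> c P)"
    using Eq_set_mass_ge[OF WA \<open>0 < \<epsilon>\<close>] by blast
  show ?case
  proof (intro exI[of _ kb] exI[of _ mb] conjI allI impI kb)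
    fix \<gamma> \<kappa> :: "'i \<Rightarrow> real" and \<mu> :: "('i \<Rightarrow> 'x \<Rightarrow> 'u) \<Rightarrow> real"
    assume "\<forall>i. 0 < \<gamma> i \<and> 0 < \<kappa> i \<and> max (\<gamma> i) (\<kappa> i) < kb"
      and st: "stationary U (Amat U \<beta> c P lam \<gamma> \<kappa>) \<mu>"
    then have "1 - \<epsilon> / 4 \<le> sum ((mulA U (Amat U \<beta> c P lam \<gamma> \<kappa>) ^^ mb) \<mu>) (Eq_set U \<beta> c P)"
      by (intro mass) (auto simp: stationary_def)
    also have "\<dots> = sum \<mu> (Eq_set U \<beta> c P)"
      using stationary_funpow_mulA[OF st] by (intro sum.cong) (auto simp: Eq_set_def)
    finally show "1 - \<epsilon> / 4 \<le> sum \<mu> (Eq_set U \<beta> c P)" .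
  next
    fix \<gamma> \<kappa> :: "'i \<Rightarrow> real" and m and \<mu>0 :: "('i \<Rightarrow> 'x \<Rightarrow> 'u) \<Rightarrow> real"
    assume "\<forall>i. 0 < \<gamma> i \<and> 0 < \<kappa> i \<and> max (\<gamma> i) (\<kappa> i) < kb" "mb \<le> m" "is_dist U \<mu>0"
    then have "1 - \<epsilon> / 4 \<le> sum ((mulA U (Amat U \<beta> c P lam \<gamma> \<kappa>) ^^ m) \<mu>0) (Eq_set U \<beta> c P)"
      by (rule mass)
    then show "1 - \<epsilon> / 2 \<le> sum ((mulA U (Amat U \<beta> c P lam \<gamma> \<kappa>) ^^ m) \<mu>0) (Eq_set U \<beta> c P)"
      using \<open>0 < \<epsilon>\<close> by linarith
  qed
qed

end
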